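(* Assume the standing hypotheses described in the context. Take $\theta\ge0$, $0\le t\le\lambda$, and $x_*,x,y\in\mathbb X$. If $\lambda<R$, $\|x-x_0\|\le t$, $\|x_*-x\|\le\lambda-t$, $F(x_* )=0$ and \[\|F'(x_0)^{-1}[F(x)+F'(x)(y-x)]\|\le\theta\|F'(x_0)^{-1}F(x)\|,\] then \[\|x_*-y\|\le\Big[\frac{1+\theta}{2}+\frac{2\theta}{\kappa}\Big]\|x_*-x\|,\] \[\|x_*-y\|\le\Big[\frac{1+\theta}{2}\frac{D^-f'(\lambda)}{|f'(\lambda)|}\|x_*-x\|+\theta\,\frac{2+f'(\lambda)}{|f'(\lambda)|}\Big]\|x_*-x\|.\]
   Context: Standing hypotheses: $\mathbb X,\mathbb Y$ are Banach spaces; $B(x,r)$ is the open ball. $R\in\mathbb R$, $C\subseteq\mathbb X$, $F:C\to\mathbb Y$ is continuous and continuously differentiable on $\mathrm{int}(C)$, $x_0\in\mathrm{int}(C)$ with $F'(x_0)$ non-singular, $f:[0,R)\to\mathbb R$ is continuously differentiable, $B(x_0,R)\subseteq C$, $\|F'(x_0)^{-1}[F'(y)-F'(x)]\|\le f'(\|y-x\|+\|x-x_0\|)-f'(\|x-x_0\|)$ for all $x,y\in B(x_0,R)$ with $\|x-x_0\|+\|y-x\|<R$, $\|F'(x_0)^{-1}F(x_0)\|\le f(0)$, and (h1) $f(0)>0$, $f'(0)=-1$; (h2) $f'$ is strictly increasing and convex; (h3) $f(t)<0$ for some $t\in(0,R)$. Notation: $\kappa:=\sup_{0<t<R}\frac{-f(t)}{t}$,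 $\lambda:=\sup\{t\in[0,R):\kappa+f'(t)<0\}$; $D^-f'(\lambda)$ is the left derivative of $f'$ at $\lambda$. *)

theory Defs
  imports "HOL-Analysis.Analysis"
begin

definition kappa_of :: "(real \<Rightarrow> real) \<Rightarrow> real \<Rightarrow> real" where
  "kappa_of f R = Sup {- f t / t | t. 0 < t \<and> t < R}"

definition lambda_of :: "(real \<Rightarrow> real) \<Rightarrow> (real \<Rightarrow> real) \<Rightarrow> real \<Rightarrow> real" where
  "lambda_of f f' R = Sup {t. 0 \<le> t \<and> t < R \<and> kappa_of f R + f' t < 0}"

definition left_deriv :: "(real \<Rightarrow> real) \<Rightarrow> real \<Rightarrow> real" where
  "left_deriv g x = Lim (at_left x) (\<lambda>s. (g s - g x) / (s - x))"

end

theory Submission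
  imports Defs
begin

text \<open>
  Write \<open>s = \<parallel>x\<^sub>* - x\<parallel>\<close> and \<open>t\<^sub>x = \<parallel>x - x\<^sub>0\<parallel>\<close>, so \<open>t\<^sub>x + s \<le> \<lambda>\<close>.
  The majorant condition makes \<open>F'(x\<^sub>0)\<^sup>-\<^sup>1 F'(x)\<close> a perturbation of the identity of size
  \<open>1 + f'(t\<^sub>x)\<close>, so it stretches every vector by a factor between \<open>a = -f'(t\<^sub>x)\<close> and \<open>2 - a\<close>.
  Integrating the majorant condition along \<open>[x, x\<^sub>*]\<close> and using convexity of \<open>f'\<close> bounds the
  linearisation error at \<open>x\<^sub>*\<close> by \<open>s\<^sup>2 q / 2\<close>, where \<open>q\<close> is the slope of \<open>f'\<close> between \<open>t\<^sub>x\<close>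
  and \<open>\<lambda>\<close>; this slope is at most \<open>D\<^sup>-f'(\<lambda>)\<close> and satisfies \<open>s q \<le> a\<close>.  Since \<open>F(x\<^sub>*) = 0\<close>,
  the residual condition turns these into \<open>a \<parallel>x\<^sub>* - y\<parallel> \<le> (1 + \<theta>) s\<^sup>2 q / 2 + \<theta> (2 - a) s\<close>, and
  \<open>\<kappa> \<le> |f'(\<lambda>)| \<le> a\<close> gives both estimates.
\<close>

lemma strict_mono_deriv_above_tangent:
  fixes f f' :: "real \<Rightarrow> real"
  assumes f_deriv: "\<And>s. s \<in> {0..<R} \<Longrightarrow> (f has_real_derivative f' s) (at s within {0..<R})"
    and mono: "strict_mono_on {0..<R} f'"
    and t: "0 < t" "t < R"
  shows "f 0 + f' 0 * t < f t"
proof -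
  have cont: "continuous_on {0..t} f"
    using DERIV_continuous_on[OF f_deriv] by (rule continuous_on_subset) (use t in auto)
  have deriv: "(f has_real_derivative f' z) (at z)" if "0 < z" "z < t" for z
  proof -
    have "at z within {0..<R} = at z"
      by (rule at_within_open_subset[of _ "{0<..<R}"]) (use that t in auto)
    then show ?thesis using f_deriv[of z] that t by simp
  qed
  obtain l z where z: "0 < z" "z < t" "DERIV f z :> l" "f t - f 0 = (t - 0) * l"
    using MVT[OF t(1) cont] deriv real_differentiable_def by metis
  have "l = f' z" using DERIV_unique[OF z(3) deriv[OF z(1,2)]] .
  moreover have "f' 0 < f' z" using z t by (auto intro!: strict_mono_onD[OF mono])
  ultimately have "f' 0 * t < f t - f 0" using z t by (simp add: mult_strict_right_mono)
  then show ?thesis by simp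
qed

lemma kappa_of_bounds:
  fixes f f' :: "real \<Rightarrow> real"
  assumes f_deriv: "\<And>s. s \<in> {0..<R} \<Longrightarrow> (f has_real_derivative f' s) (at s within {0..<R})"
    and f0: "f 0 > 0" and f'0: "f' 0 = -1"
    and mono: "strict_mono_on {0..<R} f'"
    and neg: "\<exists>s\<in>{0<..<R}. f s < 0"
  shows "0 < kappa_of f R" "kappa_of f R < 1"
proof -
  obtain s0 where s0: "0 < s0" "s0 < R" "f s0 < 0" using neg by auto
  let ?S = "{- f t / t | t. 0 < t \<and> t < R}"
  have bound: "- f t / t \<le> 1 - f 0 / R" if "0 < t" "t < R" for t
  proof -
    have "- f t / t < 1 - f 0 / t"
      using strict_mono_deriv_above_tangent[OF f_deriv mono that] f'0 that by (simp add: field_simps)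
    moreover have "f 0 / R \<le> f 0 / t" using that f0 by (intro divide_left_mono) auto
    ultimately show ?thesis by linarith
  qed
  have "kappa_of f R \<le> 1 - f 0 / R" unfolding kappa_of_def
    by (rule cSup_least) (use s0 bound in auto)
  then show "kappa_of f R < 1" using f0 s0 by (smt (verit) divide_pos_pos)
  have "bdd_above ?S" using bound by (auto intro!: bdd_aboveI[of _ "1 - f 0 / R"])
  then have "- f s0 / s0 \<le> kappa_of f R" unfolding kappa_of_def
    by (rule cSup_upper[rotated]) (use s0 in auto)
  moreover have "0 < - f s0 / s0" using s0 by (simp add: field_simps)
  ultimately show "0 < kappa_of f R" by linarith
qed

lemma lambda_of_pos:
  fixes f f' :: "real \<Rightarrow> real"
  assumes f'_cont: "continuous_on {0..<R} f'" and f'0: "f' 0 = -1"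
    and \<kappa>: "kappa_of f R < 1" and R: "0 < R"
  shows "0 < lambda_of f f' R"
proof -
  have "\<forall>e>0. \<exists>d>0. \<forall>t\<in>{0..<R}. dist t 0 < d \<longrightarrow> dist (f' t) (f' 0) < e"
    using f'_cont R unfolding continuous_on_iff by (metis atLeastLessThan_iff order_refl)
  then obtain \<delta> where \<delta>: "\<delta> > 0" "\<forall>t\<in>{0..<R}. dist t 0 < \<delta> \<longrightarrow> dist (f' t) (f' 0) < 1 - kappa_of f R"
    using \<kappa> by (meson diff_gt_0_iff_gt)
  define t where "t = min (\<delta> / 2) (R / 2)"
  have t: "0 < t" "t < R" "t < \<delta>" using \<delta> R by (auto simp: t_def)
  then have "kappa_of f R + f' t < 0" using \<delta> f'0 by (auto simp: dist_real_def)
  then have "t \<le> lambda_of f f' R" unfolding lambda_of_def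
    by (intro cSup_upper) (use t in \<open>auto intro: bdd_aboveI[of _ R]\<close>)
  with t show ?thesis by linarith
qed

lemma f'_lambda_of_le_neg_kappa:
  fixes f f' :: "real \<Rightarrow> real"
  assumes f'_cont: "continuous_on {0..<R} f'" and f'0: "f' 0 = -1"
    and \<kappa>: "kappa_of f R < 1" and R: "0 < R" and lam: "lambda_of f f' R < R"
  shows "f' (lambda_of f f' R) \<le> - kappa_of f R"
proof -
  define T where "T = {t. 0 \<le> t \<and> t < R \<and> kappa_of f R + f' t < 0}"
  have lam_def: "lambda_of f f' R = Sup T" by (simp add: lambda_of_def T_def)
  have "0 \<in> T" using \<kappa> f'0 R by (auto simp: T_def)
  have bdd: "bdd_above T" by (auto simp: T_def intro: bdd_aboveI[of _ R])
  let ?C = "{t \<in> {0..lambda_of f f' R}. f' t \<le> - kappa_of f R}"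
  have "closed ?C"
    using lam by (intro continuous_on_closed_Collect_le continuous_on_subset[OF f'_cont] continuous_intros) auto
  moreover have "T \<subseteq> ?C" using cSup_upper[OF _ bdd] by (auto simp: T_def lam_def)
  ultimately have "Sup T \<in> ?C" using closed_subset_contains_Sup \<open>0 \<in> T\<close> bdd by blast
  then show ?thesis by (simp add: lam_def)
qed

lemma convex_on_slope_le_left_deriv:
  fixes g :: "real \<Rightarrow> real"
  assumes convex: "convex_on {a..<b} g" and l: "a < l" "l < b" and u: "a \<le> u" "u < l"
  shows "(g u - g l) / (u - l) \<le> left_deriv g l"
proof -
  define q where "q v = (g v - g l) / (v - l)" for v
  define w where "w = (l + b) / 2"
  have w: "l < w" "w < b" using l by (auto simp: w_def)
  have q_le: "q v \<le> (g l - g w) / (l - w)" if "a \<le> v" "v < l" for v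
  proof -
    have "q v \<le> (g v - g w) / (v - w)"
      unfolding q_def by (rule convex_on_slope_le(1)[OF convex]) (use that w in auto)
    also have "\<dots> \<le> (g l - g w) / (l - w)"
      by (rule convex_on_slope_le(2)[OF convex]) (use that w in auto)
    finally show ?thesis .
  qed
  have q_mono: "q v \<le> q v'" if "a \<le> v" "v < v'" "v' < l" for v v'
    unfolding q_def by (rule convex_on_slope_le(2)[OF convex]) (use that l in auto)
  define L where "L = Sup (q ` {a..<l})"
  have ne: "q ` {a..<l} \<noteq> {}" using l by auto
  have bdd: "bdd_above (q ` {a..<l})" using q_le by (auto intro!: bdd_aboveI2)
  have "(q \<longlongrightarrow> L) (at_left l)"
  proof (rule increasing_tendsto)
    show "\<forall>\<^sub>F v in at_left l. q v \<le> L"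
      using eventually_at_left_real[OF l(1)]
      by eventually_elim (auto simp: L_def intro!: cSup_upper[OF _ bdd])
  next
    fix c assume "c < L"
    then obtain v where v: "a \<le> v" "v < l" "c < q v"
      unfolding L_def using less_cSupD[OF ne] by (metis atLeastLessThan_iff imageE)
    show "\<forall>\<^sub>F v' in at_left l. c < q v'"
      using eventually_at_left_real[OF v(2)]
      by eventually_elim (use q_mono[of v] v in force)
  qed
  then have "left_deriv g l = L" unfolding left_deriv_def q_def by (intro tendsto_Lim) auto
  then show ?thesis using cSup_upper[OF _ bdd, of "q u"] u by (auto simp: L_def q_def)
qed

lemma mono_convex_slope_bounds:
  fixes g :: "real \<Rightarrow> real"
  assumes convex: "convex_on {a..<b} g" and mono: "mono_on {a..<b} g"
    and l: "a < l" "l < b" and u: "a \<le> u" "u \<le> l"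
  shows "0 \<le> (g l - g u) / (l - u)" and "(g l - g u) / (l - u) \<le> left_deriv g l"
proof -
  have swap: "(g v - g l) / (v - l) = (g l - g v) / (l - v)" for v
    by (metis minus_diff_eq minus_divide_divide)
  have nonneg: "0 \<le> (g l - g v) / (l - v)" if "a \<le> v" "v \<le> l" for v
    using mono_onD[OF mono, of v l] that l by (auto intro!: divide_nonneg_nonneg)
  show "0 \<le> (g l - g u) / (l - u)" using nonneg[OF u] .
  show "(g l - g u) / (l - u) \<le> left_deriv g l"
  proof (cases "u = l")
    \<comment> \<open>then the slope is \<open>0\<close> by division by zero, and monotonicity makes \<open>D\<^sup>-g(l) \<ge> 0\<close>\<close>
    case True
    have "0 \<le> left_deriv g l"
      using nonneg[of a] convex_on_slope_le_left_deriv[OF convex l order_refl l(1)] l swap[of a]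
      by linarith
    with True show ?thesis by simp
  next
    case False
    with u have "u < l" by simp
    from convex_on_slope_le_left_deriv[OF convex l u(1) this] show ?thesis by (simp add: swap)
  qed
qed

lemma near_inverse_stretch_bounds:
  fixes A A0 :: "'a::real_normed_vector \<Rightarrow>\<^sub>L 'b::real_normed_vector" and Finv :: "'b \<Rightarrow>\<^sub>L 'a"
  assumes inverse: "Finv o\<^sub>L A0 = id_blinfun" and near: "norm (Finv o\<^sub>L (A - A0)) \<le> c"
  shows "(1 - c) * norm v \<le> norm (Finv (A v))" "norm (Finv (A v)) \<le> (1 + c) * norm v"
proof -
  have "Finv (A v) - v = (Finv o\<^sub>L (A - A0)) v"
    using arg_cong[OF inverse, of "\<lambda>T. blinfun_apply T v"]
    by (simp add: blinfun.diff_left blinfun.diff_right)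
  also have "norm \<dots> \<le> c * norm v"
    using norm_blinfun[of "Finv o\<^sub>L (A - A0)" v] near by (meson mult_right_mono norm_ge_zero order_trans)
  finally have dev: "norm (Finv (A v) - v) \<le> c * norm v" .
  show "(1 - c) * norm v \<le> norm (Finv (A v))"
    using norm_triangle_sub[of v "Finv (A v)"] dev by (simp add: norm_minus_commute algebra_simps)
  show "norm (Finv (A v)) \<le> (1 + c) * norm v"
    using norm_triangle_sub[of "Finv (A v)" v] dev by (simp add: algebra_simps)
qed

lemma linearization_error_bound:
  fixes F :: "'a::real_normed_vector \<Rightarrow> 'b::real_normed_vector"
    and F' :: "'a \<Rightarrow> ('a \<Rightarrow>\<^sub>L 'b)" and Finv :: "'b \<Rightarrow>\<^sub>L 'c::real_normed_vector"
  assumes cont: "continuous_on (closed_segment x (x + d)) F"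
    and deriv: "\<And>\<tau>. 0 < \<tau> \<Longrightarrow> \<tau> < 1 \<Longrightarrow> (F has_derivative F' (x + \<tau> *\<^sub>R d)) (at (x + \<tau> *\<^sub>R d))"
    and bound: "\<And>\<tau>. 0 < \<tau> \<Longrightarrow> \<tau> < 1 \<Longrightarrow> norm (Finv o\<^sub>L (F' (x + \<tau> *\<^sub>R d) - F' x)) \<le> \<tau> * K"
  shows "norm (Finv (F (x + d) - F x - F' x d)) \<le> K / 2 * norm d"
proof -
  define p where "p \<tau> = x + \<tau> *\<^sub>R d" for \<tau> :: real
  define g where "g \<tau> = Finv (F (p \<tau>) - \<tau> *\<^sub>R F' x d)" for \<tau>
  define \<phi> where "\<phi> \<tau> = \<tau>\<^sup>2 / 2 * (K * norm d)" for \<tau> :: real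
  have "p ` {0..1} \<subseteq> closed_segment x (x + d)"
    by (auto simp: p_def in_segment algebra_simps intro!: exI)
  then have "continuous_on {0..1} g"
    unfolding g_def p_def
    by (intro continuous_intros continuous_on_compose2[OF cont]) (auto simp: p_def)
  moreover have "continuous_on {0..1} \<phi>" by (auto simp: \<phi>_def intro!: continuous_intros)
  moreover have "(g has_vector_derivative (Finv o\<^sub>L (F' (p \<tau>) - F' x)) d) (at \<tau>)"
    if "0 < \<tau>" "\<tau> < 1" for \<tau>
  proof -
    have "(p has_derivative (\<lambda>h. h *\<^sub>R d)) (at \<tau>)"
      unfolding p_def by (auto intro!: derivative_eq_intros)
    from has_derivative_compose[OF this deriv[OF that, folded p_def]]
    have "((\<lambda>\<tau>. F (p \<tau>) - \<tau> *\<^sub>R F' x d) has_derivative (\<lambda>h. F' (p \<tau>) (h *\<^sub>R d) - h *\<^sub>R F' x d)) (at \<tau>)"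
      by (auto intro!: derivative_eq_intros)
    from has_derivative_compose[OF this bounded_linear_imp_has_derivative[OF blinfun.bounded_linear_right[of Finv]]]
    show ?thesis unfolding has_vector_derivative_def g_def
      by (rule has_derivative_eq_rhs)
        (auto simp: blinfun.scaleR_right blinfun.diff_right blinfun.diff_left scaleR_diff_right)
  qed
  moreover have "(\<phi> has_vector_derivative \<tau> * (K * norm d)) (at \<tau>)" for \<tau>
    unfolding \<phi>_def has_vector_derivative_def
    by (auto intro!: derivative_eq_intros simp: power2_eq_square field_simps)
  moreover have "norm ((Finv o\<^sub>L (F' (p \<tau>) - F' x)) d) \<le> \<tau> * (K * norm d)"
    if "0 < \<tau>" "\<tau> < 1" for \<tau>
    using norm_blinfun[of "Finv o\<^sub>L (F' (p \<tau>) - F' x)" d] mult_right_mono[OF bound[OF that] norm_ge_zero[of d]]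
    by (simp add: p_def mult.assoc)
  ultimately have "norm (g 1 - g 0) \<le> \<phi> 1 - \<phi> 0"
    by (intro differentiable_bound_general[OF zero_less_one]) auto
  then show ?thesis by (simp add: g_def p_def \<phi>_def blinfun.diff_right blinfun.add_right algebra_simps)
qed

lemma inexact_step_error_bound:
  fixes F :: "'a::real_normed_vector \<Rightarrow> 'b::real_normed_vector"
    and A :: "'a \<Rightarrow>\<^sub>L 'b" and Finv :: "'b \<Rightarrow>\<^sub>L 'c::real_normed_vector"
  assumes root: "F xs = 0"
    and lower: "\<And>v. a * norm v \<le> norm (Finv (A v))"
    and upper: "norm (Finv (A (xs - x))) \<le> M"
    and residual: "norm (Finv (F x + A (y - x))) \<le> \<theta> * norm (Finv (F x))"
    and \<theta>: "0 \<le> \<theta>"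
  shows "a * norm (xs - y) \<le> (1 + \<theta>) * norm (Finv (F xs - F x - A (xs - x))) + \<theta> * M"
proof -
  define E where "E = Finv (F xs - F x - A (xs - x))"
  define r where "r = Finv (F x + A (y - x))"
  have "Finv (F x) = - E - Finv (A (xs - x))"
    using root by (simp add: E_def blinfun.diff_right blinfun.minus_right)
  then have "norm (Finv (F x)) \<le> norm E + M"
    using norm_triangle_ineq4[of "- E"] upper by (smt (verit) norm_minus_cancel)
  then have r_bound: "norm r \<le> \<theta> * (norm E + M)"
    using residual \<theta> unfolding r_def by (smt (verit) mult_left_mono)
  have "A (xs - y) = A (xs - x) - A (y - x)"
    by (metis blinfun.diff_right diff_diff_eq2 diff_add_cancel)
  then have "Finv (A (xs - y)) = - E - r"
    using root by (simp add: E_def r_def blinfun.diff_right blinfun.add_right blinfun.minus_right)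
  then have "norm (Finv (A (xs - y))) \<le> norm E + norm r"
    using norm_triangle_ineq4[of "- E" r] by simp
  then show ?thesis using lower[of "xs - y"] r_bound by (simp add: E_def algebra_simps)
qed

lemma majorant_linearization_error:
  fixes F :: "'a::real_normed_vector \<Rightarrow> 'b::real_normed_vector"
    and F' :: "'a \<Rightarrow> ('a \<Rightarrow>\<^sub>L 'b)" and Finv :: "'b \<Rightarrow>\<^sub>L 'a" and f' :: "real \<Rightarrow> real"
  assumes F_cont: "continuous_on C F"
    and F_deriv: "\<And>z. z \<in> interior C \<Longrightarrow> (F has_derivative blinfun_apply (F' z)) (at z)"
    and ball_sub: "ball x0 R \<subseteq> C"
    and majorant: "\<And>u v. u \<in> ball x0 R \<Longrightarrow> v \<in> ball x0 R \<Longrightarrow> norm (u - x0) + norm (v - u) < R \<Longrightarrow>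
        norm (Finv o\<^sub>L (F' v - F' u)) \<le> f' (norm (v - u) + norm (u - x0)) - f' (norm (u - x0))"
    and convex: "convex_on {0..<R} f'"
    and near: "norm (x - x0) + norm d \<le> l" and l: "l < R"
  shows "norm (Finv (F (x + d) - F x - F' x d))
    \<le> (norm d)\<^sup>2 / 2 * ((f' l - f' (norm (x - x0))) / (l - norm (x - x0)))"
proof (cases "d = 0")
  case False
  define tx s where "tx = norm (x - x0)" and "s = norm d"
  define q where "q = (f' l - f' tx) / (l - tx)"
  have s: "0 < s" and tx: "0 \<le> tx" using False by (simp_all add: s_def tx_def)
  have in_ball: "x + \<tau> *\<^sub>R d \<in> ball x0 R" if "0 \<le> \<tau>" "\<tau> \<le> 1" for \<tau>
  proof -
    have eq: "x + \<tau> *\<^sub>R d - x0 = (x - x0) + \<tau> *\<^sub>R d" by simp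
    have "norm (x + \<tau> *\<^sub>R d - x0) \<le> tx + \<tau> * s"
      unfolding eq tx_def s_def using norm_triangle_ineq[of "x - x0" "\<tau> *\<^sub>R d"] that by simp
    also have "\<dots> \<le> tx + s" using that s by (simp add: mult_left_le_one_le)
    finally show ?thesis using near l by (simp add: dist_norm norm_minus_commute tx_def s_def)
  qed
  have segment: "closed_segment x (x + d) \<subseteq> ball x0 R"
    using in_ball[of 0] in_ball[of 1] by (intro closed_segment_subset) auto
  have ball_int: "ball x0 R \<subseteq> interior C" by (rule interior_maximal[OF ball_sub]) simp
  have inside: "tx < tx + \<tau> * s" "tx + \<tau> * s < l" if "0 < \<tau>" "\<tau> < 1" for \<tau>
  proof -
    show "tx < tx + \<tau> * s" using that s by simp
    have "\<tau> * s < s" using that s by simp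
    then show "tx + \<tau> * s < l" using near by (simp add: tx_def s_def)
  qed
  have chord: "f' (tx + \<tau> * s) - f' tx \<le> \<tau> * s * q" if "0 < \<tau>" "\<tau> < 1" for \<tau>
  proof -
    have "(f' tx - f' (tx + \<tau> * s)) / (tx - (tx + \<tau> * s)) \<le> (f' tx - f' l) / (tx - l)"
      using inside[OF that] l tx by (intro convex_on_slope_le(1)[OF convex]) auto
    also have "\<dots> = q" by (metis q_def minus_diff_eq minus_divide_divide)
    finally have "(f' tx - f' (tx + \<tau> * s)) / (tx - (tx + \<tau> * s)) \<le> q" .
    moreover have "(f' tx - f' (tx + \<tau> * s)) / (tx - (tx + \<tau> * s)) = (f' (tx + \<tau> * s) - f' tx) / (\<tau> * s)"
      by (simp add: divide_simps)
    ultimately show ?thesis using that s by (simp add: pos_divide_le_eq mult_ac)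
  qed
  have "norm (Finv (F (x + d) - F x - F' x d)) \<le> s * q / 2 * norm d"
  proof (rule linearization_error_bound)
    show "continuous_on (closed_segment x (x + d)) F"
      using segment ball_sub by (rule continuous_on_subset[OF F_cont, OF order_trans])
    fix \<tau> :: real assume \<tau>: "0 < \<tau>" "\<tau> < 1"
    show "(F has_derivative F' (x + \<tau> *\<^sub>R d)) (at (x + \<tau> *\<^sub>R d))"
      using F_deriv in_ball[of \<tau>] ball_int \<tau> by auto
    have "norm (Finv o\<^sub>L (F' (x + \<tau> *\<^sub>R d) - F' x)) \<le> f' (\<tau> * s + tx) - f' tx"
      using majorant[of x "x + \<tau> *\<^sub>R d"] in_ball[of 0] in_ball[of \<tau>] inside[OF \<tau>] \<tau> l
      by (simp add: tx_def s_def)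
    then show "norm (Finv o\<^sub>L (F' (x + \<tau> *\<^sub>R d) - F' x)) \<le> \<tau> * (s * q)"
      using chord[OF \<tau>] by (simp add: add.commute mult.assoc)
  qed
  then show ?thesis by (simp add: tx_def s_def q_def power2_eq_square mult_ac)
qed simp

lemma inexact_newton_error_arith:
  fixes a b k L e s q D \<theta> :: real
  assumes step: "a * L \<le> (1 + \<theta>) * e + \<theta> * (2 - a) * s"
    and e: "e \<le> s\<^sup>2 / 2 * q" and sq: "s * q \<le> a" and qD: "q \<le> D" and q: "0 \<le> q"
    and k: "0 < k" "k \<le> b" and b: "b \<le> a" and \<theta>: "0 \<le> \<theta>" and s: "0 \<le> s"
  shows "L \<le> ((1 + \<theta>) / 2 + 2 * \<theta> / k) * s"
    and "L \<le> ((1 + \<theta>) / 2 * D / b * s + \<theta> * (2 - b) / b) * s"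
proof -
  have a: "0 < a" using k b by linarith
  have "L \<le> ((1 + \<theta>) * e + \<theta> * (2 - a) * s) / a"
    using step a by (simp add: pos_le_divide_eq mult.commute)
  also have "\<dots> = (1 + \<theta>) * e / a + \<theta> * (2 / a - 1) * s"
    using a by (simp add: field_simps)
  finally have L: "L \<le> (1 + \<theta>) * e / a + \<theta> * (2 / a - 1) * s" .
  have e_a: "(1 + \<theta>) * e / a \<le> (1 + \<theta>) / 2 * s"
  proof -
    have "e \<le> s / 2 * (s * q)" using e by (simp add: power2_eq_square)
    also have "\<dots> \<le> s / 2 * a" using sq s by (intro mult_left_mono) auto
    finally have "(1 + \<theta>) * e \<le> (1 + \<theta>) * (s / 2 * a)" using \<theta> by (intro mult_left_mono) auto
    then show ?thesis using a by (simp add: pos_divide_le_eq algebra_simps)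
  qed
  have e_b: "(1 + \<theta>) * e / a \<le> (1 + \<theta>) / 2 * D / b * s * s"
  proof -
    have "e \<le> s\<^sup>2 / 2 * D" using e qD s by (smt (verit) mult_left_mono zero_le_power2 divide_nonneg_pos)
    then have "(1 + \<theta>) * e / a \<le> (1 + \<theta>) * (s\<^sup>2 / 2 * D) / a"
      using a \<theta> by (intro divide_right_mono mult_left_mono) auto
    also have "\<dots> \<le> (1 + \<theta>) * (s\<^sup>2 / 2 * D) / b"
      using k b \<theta> q qD by (intro divide_left_mono) auto
    finally show ?thesis by (simp add: power2_eq_square mult_ac)
  qed
  have "2 / a \<le> 2 / k" "2 / a \<le> 2 / b" using k b by (auto intro!: divide_left_mono)
  then have "2 / a - 1 \<le> 2 / k" "2 / a - 1 \<le> 2 / b - 1" by linarith+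
  then have "\<theta> * (2 / a - 1) * s \<le> \<theta> * (2 / k) * s" "\<theta> * (2 / a - 1) * s \<le> \<theta> * (2 / b - 1) * s"
    using mult_right_mono[OF mult_left_mono[OF _ \<theta>] s] by blast+
  moreover have "((1 + \<theta>) / 2 + 2 * \<theta> / k) * s = (1 + \<theta>) / 2 * s + \<theta> * (2 / k) * s"
    by (simp add: algebra_simps)
  moreover have "((1 + \<theta>) / 2 * D / b * s + \<theta> * (2 - b) / b) * s
      = (1 + \<theta>) / 2 * D / b * s * s + \<theta> * (2 / b - 1) * s"
    using k by (simp add: field_simps)
  ultimately show "L \<le> ((1 + \<theta>) / 2 + 2 * \<theta> / k) * s"
    and "L \<le> ((1 + \<theta>) / 2 * D / b * s + \<theta> * (2 - b) / b) * s"
    using L e_a e_b by linarith+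
qed

theorem lemma3p7:
  fixes R :: real and C :: "'a::banach set" and F :: "'a \<Rightarrow> 'b::banach"
    and F' :: "'a \<Rightarrow> ('a \<Rightarrow>\<^sub>L 'b)" and Finv :: "'b \<Rightarrow>\<^sub>L 'a"
    and x0 :: 'a and f f' :: "real \<Rightarrow> real"
    and \<theta> t :: real and xs x y :: 'a
  assumes F_cont: "continuous_on C F"
    and F_deriv: "\<And>z. z \<in> interior C \<Longrightarrow> (F has_derivative blinfun_apply (F' z)) (at z)"
    and F'_cont: "continuous_on (interior C) F'"
    and x0_int: "x0 \<in> interior C"
    and Finv_left: "Finv o\<^sub>L F' x0 = id_blinfun"
    and Finv_right: "F' x0 o\<^sub>L Finv = id_blinfun"
    and f_deriv: "\<And>s. s \<in> {0..<R} \<Longrightarrow> (f has_real_derivative f' s) (at s within {0..<R})"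
    and f'_cont: "continuous_on {0..<R} f'"
    and ball_sub: "ball x0 R \<subseteq> C"
    and majorant: "\<And>u v. u \<in> ball x0 R \<Longrightarrow> v \<in> ball x0 R \<Longrightarrow> norm (u - x0) + norm (v - u) < R \<Longrightarrow>
        norm (Finv o\<^sub>L (F' v - F' u)) \<le> f' (norm (v - u) + norm (u - x0)) - f' (norm (u - x0))"
    and init: "norm (Finv (F x0)) \<le> f 0"
    and h1: "f 0 > 0" "f' 0 = -1"
    and h2: "strict_mono_on {0..<R} f'" "convex_on {0..<R} f'"
    and h3: "\<exists>s\<in>{0<..<R}. f s < 0"
    and \<theta>_nonneg: "\<theta> \<ge> 0"
    and t_bounds: "0 \<le> t" "t \<le> lambda_of f f' R"
    and lam_lt: "lambda_of f f' R < R"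
    and x_near: "norm (x - x0) \<le> t"
    and xs_near: "norm (xs - x) \<le> lambda_of f f' R - t"
    and xs_zero: "F xs = 0"
    and inexact: "norm (Finv (F x + F' x (y - x))) \<le> \<theta> * norm (Finv (F x))"
  shows "norm (xs - y) \<le> ((1 + \<theta>) / 2 + 2 * \<theta> / kappa_of f R) * norm (xs - x)
    \<and> norm (xs - y) \<le> ((1 + \<theta>) / 2 * left_deriv f' (lambda_of f f' R) / \<bar>f' (lambda_of f f' R)\<bar> * norm (xs - x)
         + \<theta> * (2 + f' (lambda_of f f' R)) / \<bar>f' (lambda_of f f' R)\<bar>) * norm (xs - x)"
proof -
  let ?\<kappa> = "kappa_of f R" and ?l = "lambda_of f f' R"
  define tx s where "tx = norm (x - x0)" and "s = norm (xs - x)"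
  define q where "q = (f' ?l - f' tx) / (?l - tx)"
  have R: "0 < R" using h3 by auto
  have \<kappa>: "0 < ?\<kappa>" "?\<kappa> < 1" using kappa_of_bounds[OF f_deriv h1 h2(1) h3] by simp_all
  have l_pos: "0 < ?l" using lambda_of_pos[OF f'_cont h1(2) \<kappa>(2) R] .
  have f'_l: "f' ?l \<le> - ?\<kappa>" using f'_lambda_of_le_neg_kappa[OF f'_cont h1(2) \<kappa>(2) R lam_lt] .
  have near: "tx + s \<le> ?l" using x_near xs_near by (simp add: tx_def s_def)
  have tx: "0 \<le> tx" "tx \<le> ?l" using near by (auto simp: tx_def s_def intro: order_trans[rotated])
  have f'_tx: "f' tx \<le> f' ?l" using strict_mono_on_leD[OF h2(1)] tx lam_lt by simp
  have "norm (Finv o\<^sub>L (F' x - F' x0)) \<le> 1 + f' tx"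
    using majorant[of x0 x] tx lam_lt R h1(2) by (simp add: tx_def dist_norm norm_minus_commute)
  note stretch = near_inverse_stretch_bounds[OF Finv_left this]
  have step: "- f' tx * norm (xs - y)
      \<le> (1 + \<theta>) * norm (Finv (F xs - F x - F' x (xs - x))) + \<theta> * (2 - - f' tx) * s"
    using inexact_step_error_bound[OF xs_zero stretch(1) stretch(2) inexact \<theta>_nonneg]
    by (simp add: s_def algebra_simps)
  have err: "norm (Finv (F xs - F x - F' x (xs - x))) \<le> s\<^sup>2 / 2 * q"
    using majorant_linearization_error[OF F_cont F_deriv ball_sub majorant h2(2), of x "xs - x" ?l]
      near lam_lt by (simp add: tx_def s_def q_def)
  note slope = mono_convex_slope_bounds[OF h2(2) strict_mono_on_imp_mono_on[OF h2(1)] l_pos lam_lt tx]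
  have "s * q \<le> (?l - tx) * q" using near slope(1) by (intro mult_right_mono) (auto simp: q_def)
  also have "\<dots> \<le> - f' tx" using f'_l \<kappa> by (cases "tx = ?l") (auto simp: q_def)
  finally have sq: "s * q \<le> - f' tx" .
  have "\<bar>f' ?l\<bar> = - f' ?l" "2 + f' ?l = 2 - - f' ?l" using f'_l \<kappa> by auto
  then show ?thesis
    using inexact_newton_error_arith[OF step err sq, of "left_deriv f' ?l" ?\<kappa> "- f' ?l"]
      slope \<kappa> f'_l f'_tx \<theta>_nonneg by (simp add: q_def s_def)
qed

end
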